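(* Let $\mathbf{X}$ be a finite induced subtournament of $\mathbf{S}(2)$. Then $\mathbf{X}$ has exactly $2|\mathbf{X}|/|\mathrm{Aut}(\mathbf{X})|$ pairwise nonisomorphic extensions in $\mathcal{P}_2$.
   Context: $\mathbf{S}(2)$ is the tournament whose vertices are the points of the unit circle of $\mathbb{C}$ with rational argument, with an arc from $x$ to $y$ iff $0<\arg(y/x)<\pi$. $\mathcal{P}_2$ is the class of finite structures $\mathbf{A}=(A,<^{\mathbf{A}},P_1^{\mathbf{A}},P_2^{\mathbf{A}})$ with $<^{\mathbf{A}}$ a linear order and $(P_1^{\mathbf{A}},P_2^{\mathbf{A}})$ a partition of $A$; isomorphisms are order-preserving bijections preserving $P_1$ and $P_2$. Writing $a\sim b$ when $a,b$ lie in the same part, $p(\mathbf{A})$ is the tournament on $A$ with an arc from $a$ to $b$ iff either ($a\sim b$ and $a<^{\mathbf{A}}b$) or ($a\not\sim b$ and $b<^{\mathbf{A}}a$). An extension of a tournament $\mathbf{X}$ is any $\mathbf{A}$ with $p(\mathbf{A})=\mathbf{X}$. $\mathrm{Aut}(\mathbf{X})$ is the automorphism group of $\mathbf{X}$. *)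

theory Defs
  imports "HOL-Analysis.Analysis"
begin

definition S2_vertices :: "complex set" where
  "S2_vertices = {z. \<exists>q::rat. z = cis (of_rat q)}"

definition S2_arc :: "complex \<Rightarrow> complex \<Rightarrow> bool" where
  "S2_arc x y \<longleftrightarrow> 0 < Arg (y / x) \<and> Arg (y / x) < pi"

text \<open>A structure in P_2 on carrier A is represented by a pair (L, P1):
  L \<subseteq> A \<times> A a strict linear order on A, P1 \<subseteq> A, and P2 = A - P1.\<close>
definition P2_struct :: "'a set \<Rightarrow> ('a \<times> 'a) set \<times> 'a set \<Rightarrow> bool" where
  "P2_struct A S \<longleftrightarrow> fst S \<subseteq> A \<times> A \<and> strict_linear_order_on A (fst S) \<and> snd S \<subseteq> A"

definition p_arc :: "('a \<times> 'a) set \<times> 'a set \<Rightarrow> 'a \<Rightarrow> 'a \<Rightarrow> bool" where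
  "p_arc S a b \<longleftrightarrow>
     (((a \<in> snd S) = (b \<in> snd S)) \<and> (a, b) \<in> fst S) \<or>
     (((a \<in> snd S) \<noteq> (b \<in> snd S)) \<and> (b, a) \<in> fst S)"

definition extensions :: "'a set \<Rightarrow> ('a \<Rightarrow> 'a \<Rightarrow> bool) \<Rightarrow> (('a \<times> 'a) set \<times> 'a set) set" where
  "extensions X E = {S. P2_struct X S \<and> (\<forall>a\<in>X. \<forall>b\<in>X. p_arc S a b \<longleftrightarrow> E a b)}"

definition P2_iso :: "'a set \<Rightarrow> ('a \<times> 'a) set \<times> 'a set \<Rightarrow> 'a set \<Rightarrow> ('a \<times> 'a) set \<times> 'a set \<Rightarrow> bool" where
  "P2_iso A S B T \<longleftrightarrow> (\<exists>f. bij_betw f A B \<and>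
      (\<forall>a\<in>A. \<forall>b\<in>A. (a, b) \<in> fst S \<longleftrightarrow> (f a, f b) \<in> fst T) \<and>
      (\<forall>a\<in>A. a \<in> snd S \<longleftrightarrow> f a \<in> snd T))"

definition tour_aut :: "'a set \<Rightarrow> ('a \<Rightarrow> 'a \<Rightarrow> bool) \<Rightarrow> ('a \<Rightarrow> 'a) set" where
  "tour_aut X E = {f \<in> X \<rightarrow>\<^sub>E X. bij_betw f X X \<and> (\<forall>a\<in>X. \<forall>b\<in>X. E a b \<longleftrightarrow> E (f a) (f b))}"

end

(*
  A vertex of S(2) is a unit complex number, and x \<rightarrow> y iff Im (cnj x * y) > 0; since pi is
  irrational, no two vertices are collinear with 0. Reflecting the points of P2 through the origin,
  an extension with parts (P1, P2) must order X by the counterclockwise order of the reflected points.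
  That relation is a linear order exactly when the reflected points lie in a half-plane, and then it is
  determined by its least element together with the part containing it: there are 2|X| extensions.
  Aut(X) acts on the extensions with the isomorphism classes as orbits, and freely, because a finite
  linear order has no nontrivial automorphism.
*)

theory Submission
  imports Defs "HOL-Computational_Algebra.Polynomial"
begin

section \<open>Strict linear orders\<close>

lemma map_prod_image_mem_iff:
  assumes "inj_on f A" "R \<subseteq> A \<times> A" "a \<in> A" "b \<in> A"
  shows "(f a, f b) \<in> map_prod f f ` R \<longleftrightarrow> (a, b) \<in> R"
  using inj_on_image_mem_iff[OF map_prod_inj_on[OF assms(1) assms(1)], of "(a, b)"] assms(2-4)
  by simp

lemma strict_linear_order_on_image:
  assumes "inj_on f A" "R \<subseteq> A \<times> A" "strict_linear_order_on A R"
  shows "strict_linear_order_on (f ` A) (map_prod f f ` R)"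
proof -
  note iff = map_prod_image_mem_iff[OF assms(1,2)]
  have sub: "map_prod f f ` R \<subseteq> f ` A \<times> f ` A"
    using assms(2) by auto
  have R: "trans R" "irrefl R" "total_on A R"
    using assms(3) by (simp_all add: strict_linear_order_on_def)
  show ?thesis
    unfolding strict_linear_order_on_def
  proof (intro conjI)
    show "trans (map_prod f f ` R)"
    proof (rule transI)
      fix x y z assume xy: "(x, y) \<in> map_prod f f ` R" and yz: "(y, z) \<in> map_prod f f ` R"
      then obtain a b c where "a \<in> A" "b \<in> A" "c \<in> A" "x = f a" "y = f b" "z = f c"
        using sub by blast
      then show "(x, z) \<in> map_prod f f ` R"
        using xy yz iff R(1) by (metis transD)
    qed
    show "irrefl (map_prod f f ` R)"
    proof (unfold irrefl_def, intro allI notI)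
      fix x assume xx: "(x, x) \<in> map_prod f f ` R"
      then obtain a where "a \<in> A" "x = f a"
        using sub by blast
      then show False
        using xx iff R(2) by (simp add: irrefl_def)
    qed
    show "total_on (f ` A) (map_prod f f ` R)"
      using iff R(3) by (auto simp: total_on_def)
  qed
qed

lemma strict_linear_order_on_finite_least:
  assumes "finite X" "X \<noteq> {}" "R \<subseteq> X \<times> X" "strict_linear_order_on X R"
  obtains m where "m \<in> X" "\<And>x. x \<in> X \<Longrightarrow> x \<noteq> m \<Longrightarrow> (m, x) \<in> R"
proof -
  have "finite R"
    using assms by (meson finite_SigmaI finite_subset)
  moreover have "acyclic R"
    using assms by (simp add: acyclic_irrefl strict_linear_order_on_def trancl_id)
  ultimately have "wf R"
    by (rule finite_acyclic_wf)
  then obtain m where "m \<in> X" "\<And>y. (y, m) \<in> R \<Longrightarrow> y \<notin> X"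
    using assms(2) wfE_min by (metis ex_in_conv)
  then show ?thesis
    using that assms(4) unfolding strict_linear_order_on_def total_on_def by blast
qed

definition order_rank :: "('a \<times> 'a) set \<Rightarrow> 'a set \<Rightarrow> 'a \<Rightarrow> nat" where
  "order_rank R X x = card {y \<in> X. (y, x) \<in> R}"

lemma inj_on_order_rank:
  assumes "finite X" "strict_linear_order_on X R"
  shows "inj_on (order_rank R X) X"
proof -
  have R: "trans R" "irrefl R" "total_on X R"
    using assms(2) by (simp_all add: strict_linear_order_on_def)
  have less: "order_rank R X x < order_rank R X y" if "(x, y) \<in> R" "x \<in> X" for x y
  proof -
    have "{z \<in> X. (z, x) \<in> R} \<subset> {z \<in> X. (z, y) \<in> R}"
      using that R(1,2) by (auto simp: irrefl_def dest: transD)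
    then show ?thesis
      unfolding order_rank_def using assms(1) by (simp add: psubset_card_mono)
  qed
  show ?thesis
  proof (rule inj_onI, rule ccontr)
    fix x y assume "x \<in> X" "y \<in> X" "order_rank R X x = order_rank R X y" "x \<noteq> y"
    then show False
      using R(3) less by (metis less_irrefl total_on_def)
  qed
qed

section \<open>Extensions and their isomorphisms\<close>

lemma extensions_P2_struct:
  assumes "S \<in> extensions X E"
  shows "fst S \<subseteq> X \<times> X" "snd S \<subseteq> X" "strict_linear_order_on X (fst S)"
    and "\<And>a b. a \<in> X \<Longrightarrow> b \<in> X \<Longrightarrow> p_arc S a b \<longleftrightarrow> E a b"
  using assms by (simp_all add: extensions_def P2_struct_def)

lemma extensions_cong:
  "(\<And>a b. a \<in> X \<Longrightarrow> b \<in> X \<Longrightarrow> E a b \<longleftrightarrow> E' a b) \<Longrightarrow> extensions X E = extensions X E'"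
  by (simp add: extensions_def)

lemma P2_order_eq_if_p_arc_eq:
  assumes "fst S \<subseteq> X \<times> X" "fst T \<subseteq> X \<times> X" "snd S = snd T"
    and "\<And>a b. a \<in> X \<Longrightarrow> b \<in> X \<Longrightarrow> p_arc S a b \<longleftrightarrow> p_arc T a b"
  shows "fst S = fst T"
proof -
  have order_iff: "(a, b) \<in> fst R \<longleftrightarrow> (if (a \<in> snd R) = (b \<in> snd R) then p_arc R a b else p_arc R b a)"
    for R :: "('a \<times> 'a) set \<times> 'a set" and a b
    by (auto simp: p_arc_def)
  have same: "(a, b) \<in> fst S \<longleftrightarrow> (a, b) \<in> fst T" if "a \<in> X" "b \<in> X" for a b
    using order_iff[of a b S] order_iff[of a b T] assms(3,4) that by simp
  show ?thesis
  proof (rule set_eqI)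
    fix x :: "'a \<times> 'a"
    obtain a b where x: "x = (a, b)" by (cases x)
    show "x \<in> fst S \<longleftrightarrow> x \<in> fst T"
      using same[of a b] assms(1,2) unfolding x by blast
  qed
qed

lemma P2_iso_refl: "P2_iso A S A S"
  unfolding P2_iso_def by (intro exI[of _ id]) auto

lemma P2_iso_sym:
  assumes "P2_iso A S B T"
  shows "P2_iso B T A S"
proof -
  obtain f where f: "bij_betw f A B"
    and ord: "\<forall>a\<in>A. \<forall>b\<in>A. (a, b) \<in> fst S \<longleftrightarrow> (f a, f b) \<in> fst T"
    and part: "\<forall>a\<in>A. a \<in> snd S \<longleftrightarrow> f a \<in> snd T"
    using assms unfolding P2_iso_def by blast
  let ?g = "inv_into A f"
  have g: "bij_betw ?g B A"
    by (rule bij_betw_inv_into[OF f])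
  have "?g x \<in> A" "f (?g x) = x" if "x \<in> B" for x
    using that f by (simp_all add: bij_betw_apply[OF g] bij_betw_inv_into_right)
  then show ?thesis
    unfolding P2_iso_def using g ord part by (intro exI[of _ ?g]) auto
qed

lemma P2_iso_trans:
  assumes "P2_iso A S B T" "P2_iso B T C U"
  shows "P2_iso A S C U"
proof -
  obtain f where f: "bij_betw f A B"
    and "\<forall>a\<in>A. \<forall>b\<in>A. (a, b) \<in> fst S \<longleftrightarrow> (f a, f b) \<in> fst T"
    and "\<forall>a\<in>A. a \<in> snd S \<longleftrightarrow> f a \<in> snd T"
    using assms(1) unfolding P2_iso_def by blast
  moreover obtain g where g: "bij_betw g B C"
    and "\<forall>a\<in>B. \<forall>b\<in>B. (a, b) \<in> fst T \<longleftrightarrow> (g a, g b) \<in> fst U"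
    and "\<forall>a\<in>B. a \<in> snd T \<longleftrightarrow> g a \<in> snd U"
    using assms(2) unfolding P2_iso_def by blast
  moreover have "f a \<in> B" if "a \<in> A" for a
    using bij_betw_apply[OF f that] .
  ultimately show ?thesis
    unfolding P2_iso_def by (intro exI[of _ "g \<circ> f"]) (auto intro: bij_betw_trans)
qed

definition extension_iso ::
    "'a set \<Rightarrow> ('a \<Rightarrow> 'a \<Rightarrow> bool) \<Rightarrow> ((('a \<times> 'a) set \<times> 'a set) \<times> (('a \<times> 'a) set \<times> 'a set)) set"
  where
  "extension_iso X E = {(S, T). S \<in> extensions X E \<and> T \<in> extensions X E \<and> P2_iso X S X T}"

lemma equiv_extension_iso: "equiv (extensions X E) (extension_iso X E)"
  by (rule equivI)
    (auto simp: extension_iso_def refl_on_def sym_def trans_def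
      intro: P2_iso_refl P2_iso_sym P2_iso_trans)

definition relabel :: "('a \<Rightarrow> 'b) \<Rightarrow> ('a \<times> 'a) set \<times> 'a set \<Rightarrow> ('b \<times> 'b) set \<times> 'b set" where
  "relabel f S = (map_prod f f ` fst S, f ` snd S)"

lemma relabel_order_iff:
  assumes "inj_on f A" "fst S \<subseteq> A \<times> A" "a \<in> A" "b \<in> A"
  shows "(f a, f b) \<in> fst (relabel f S) \<longleftrightarrow> (a, b) \<in> fst S"
  using map_prod_image_mem_iff[OF assms] by (simp add: relabel_def)

lemma relabel_part_iff:
  assumes "inj_on f A" "snd S \<subseteq> A" "a \<in> A"
  shows "f a \<in> snd (relabel f S) \<longleftrightarrow> a \<in> snd S"
  using inj_on_image_mem_iff[OF assms(1)] assms(2,3) by (simp add: relabel_def)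

lemma p_arc_relabel:
  assumes "inj_on f A" "fst S \<subseteq> A \<times> A" "snd S \<subseteq> A" "a \<in> A" "b \<in> A"
  shows "p_arc (relabel f S) (f a) (f b) \<longleftrightarrow> p_arc S a b"
  using relabel_order_iff[OF assms(1,2)] relabel_part_iff[OF assms(1,3)] assms(4,5)
  by (simp add: p_arc_def)

lemma P2_iso_relabel:
  assumes "inj_on f A" "fst S \<subseteq> A \<times> A" "snd S \<subseteq> A"
  shows "P2_iso A S (f ` A) (relabel f S)"
  unfolding P2_iso_def using assms relabel_order_iff[OF assms(1,2)] relabel_part_iff[OF assms(1,3)]
  by (intro exI[of _ f]) (simp add: bij_betw_def)

lemma P2_iso_eq_relabel:
  assumes "P2_iso A S B T" and "fst S \<subseteq> A \<times> A" "snd S \<subseteq> A" "fst T \<subseteq> B \<times> B" "snd T \<subseteq> B"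
  obtains f where "bij_betw f A B" "T = relabel f S"
proof -
  obtain f where f: "bij_betw f A B"
    and ord: "\<forall>a\<in>A. \<forall>b\<in>A. (a, b) \<in> fst S \<longleftrightarrow> (f a, f b) \<in> fst T"
    and part: "\<forall>a\<in>A. a \<in> snd S \<longleftrightarrow> f a \<in> snd T"
    using assms(1) unfolding P2_iso_def by blast
  have onto: "\<exists>a\<in>A. x = f a" if "x \<in> B" for x
    using f that by (auto simp: bij_betw_def)
  have "fst T = map_prod f f ` fst S"
  proof (intro set_eqI iffI)
    fix p assume "p \<in> fst T"
    then have "fst p \<in> B" "snd p \<in> B"
      using assms(4) by auto
    then obtain a b where "a \<in> A" "b \<in> A" "p = (f a, f b)"
      using onto by (metis prod.collapse)
    then show "p \<in> map_prod f f ` fst S"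
      using ord \<open>p \<in> fst T\<close> by force
  qed (use assms(2) ord in auto)
  moreover have "snd T = f ` snd S"
    using assms(3,5) part onto by fast
  ultimately have "T = relabel f S"
    by (simp add: relabel_def prod_eq_iff)
  with f show ?thesis
    by (rule that)
qed

lemma tour_aut_bij_betw: "f \<in> tour_aut X E \<Longrightarrow> bij_betw f X X"
  by (simp add: tour_aut_def)

lemma relabel_mem_extensions:
  assumes S: "S \<in> extensions X E" and f: "f \<in> tour_aut X E"
  shows "relabel f S \<in> extensions X E"
proof -
  have inj: "inj_on f X" and onto: "f ` X = X"
    using tour_aut_bij_betw[OF f] by (simp_all add: bij_betw_def)
  have E: "E a b \<longleftrightarrow> E (f a) (f b)" if "a \<in> X" "b \<in> X" for a b
    using f that unfolding tour_aut_def by blast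
  note S' = extensions_P2_struct[OF S]
  have "strict_linear_order_on X (fst (relabel f S))"
    using strict_linear_order_on_image[OF inj S'(1,3)] onto by (simp add: relabel_def)
  moreover have "fst (relabel f S) \<subseteq> X \<times> X" "snd (relabel f S) \<subseteq> X"
    using S'(1,2) onto by (auto simp: relabel_def)
  moreover have "p_arc (relabel f S) x y \<longleftrightarrow> E x y" if "x \<in> X" "y \<in> X" for x y
  proof -
    from that have "x \<in> f ` X" "y \<in> f ` X"
      by (simp_all add: onto)
    then obtain a b where ab: "a \<in> X" "b \<in> X" and xy: "x = f a" "y = f b"
      by blast
    have "p_arc (relabel f S) (f a) (f b) \<longleftrightarrow> p_arc S a b"
      by (rule p_arc_relabel[OF inj S'(1,2) ab])
    also have "\<dots> \<longleftrightarrow> E (f a) (f b)"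
      using S'(4)[OF ab] E[OF ab] by simp
    finally show ?thesis
      unfolding xy .
  qed
  ultimately show ?thesis
    by (simp add: extensions_def P2_struct_def)
qed

lemma extension_iso_class:
  assumes S: "S \<in> extensions X E"
  shows "extension_iso X E `` {S} = (\<lambda>f. relabel f S) ` tour_aut X E"
proof (intro set_eqI iffI)
  fix T assume "T \<in> extension_iso X E `` {S}"
  then have T: "T \<in> extensions X E" and iso: "P2_iso X S X T"
    by (simp_all add: extension_iso_def)
  note S' = extensions_P2_struct[OF S] and T' = extensions_P2_struct[OF T]
  obtain f where f: "bij_betw f X X" and T_eq: "T = relabel f S"
    using P2_iso_eq_relabel[OF iso S'(1,2) T'(1,2)] by blast
  let ?g = "restrict f X"
  have "?g \<in> tour_aut X E"
    unfolding tour_aut_def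
  proof (intro CollectI conjI ballI)
    show "?g \<in> X \<rightarrow>\<^sub>E X" "bij_betw ?g X X"
      using f by (simp_all add: bij_betw_apply)
  next
    fix a b assume ab: "a \<in> X" "b \<in> X"
    have "E a b \<longleftrightarrow> p_arc S a b"
      using S'(4)[OF ab] by simp
    also have "\<dots> \<longleftrightarrow> p_arc T (f a) (f b)"
      unfolding T_eq by (rule p_arc_relabel[OF bij_betw_imp_inj_on[OF f] S'(1,2) ab, symmetric])
    also have "\<dots> \<longleftrightarrow> E (?g a) (?g b)"
      using T'(4) bij_betw_apply[OF f] ab by simp
    finally show "E a b \<longleftrightarrow> E (?g a) (?g b)" .
  qed
  moreover have "relabel ?g S = T"
    unfolding T_eq using S'(1,2) by (auto simp: relabel_def intro!: image_cong)
  ultimately show "T \<in> (\<lambda>f. relabel f S) ` tour_aut X E"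
    by (intro rev_image_eqI) auto
next
  fix T assume "T \<in> (\<lambda>f. relabel f S) ` tour_aut X E"
  then obtain f where f: "f \<in> tour_aut X E" and T: "T = relabel f S"
    by blast
  have inj: "inj_on f X" and onto: "f ` X = X"
    using tour_aut_bij_betw[OF f] by (simp_all add: bij_betw_def)
  have "P2_iso X S X T"
    using P2_iso_relabel[OF inj extensions_P2_struct(1,2)[OF S]] by (simp add: onto T)
  then show "T \<in> extension_iso X E `` {S}"
    using S T relabel_mem_extensions[OF S f] by (simp add: extension_iso_def)
qed

lemma order_rank_relabel:
  assumes "inj_on f X" "f ` X = X" "fst S \<subseteq> X \<times> X" "a \<in> X"
  shows "order_rank (fst (relabel f S)) X (f a) = order_rank (fst S) X a"
proof -
  have "{y \<in> X. (y, f a) \<in> fst (relabel f S)} = f ` {y \<in> X. (y, a) \<in> fst S}"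
  proof (intro set_eqI iffI)
    fix y assume y: "y \<in> {y \<in> X. (y, f a) \<in> fst (relabel f S)}"
    then have "y \<in> f ` X"
      using assms(2) by simp
    then obtain b where "b \<in> X" "y = f b"
      by blast
    then show "y \<in> f ` {y \<in> X. (y, a) \<in> fst S}"
      using y relabel_order_iff[OF assms(1,3)] assms(4) by auto
  qed (use assms relabel_order_iff[OF assms(1,3)] in auto)
  moreover have "inj_on f {y \<in> X. (y, a) \<in> fst S}"
    using assms(1) by (rule inj_on_subset) auto
  ultimately show ?thesis
    by (simp add: order_rank_def card_image)
qed

lemma inj_on_relabel_tour_aut:
  assumes "finite X" "S \<in> extensions X E"
  shows "inj_on (\<lambda>f. relabel f S) (tour_aut X E)"
proof (rule inj_onI)
  fix f g assume f: "f \<in> tour_aut X E" and g: "g \<in> tour_aut X E" and eq: "relabel f S = relabel g S"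
  note S' = extensions_P2_struct[OF assms(2)]
  have "strict_linear_order_on X (fst (relabel f S))"
    using extensions_P2_struct(3)[OF relabel_mem_extensions[OF assms(2) f]] .
  then have inj: "inj_on (order_rank (fst (relabel f S)) X) X"
    using assms(1) by (rule inj_on_order_rank[rotated])
  have "f a = g a" if "a \<in> X" for a
  proof (rule inj_onD[OF inj])
    have "order_rank (fst (relabel h S)) X (h a) = order_rank (fst S) X a"
      if "h \<in> tour_aut X E" for h
      using order_rank_relabel[OF _ _ S'(1) \<open>a \<in> X\<close>] tour_aut_bij_betw[OF that]
      by (simp add: bij_betw_def)
    from this[OF f] this[OF g] show "order_rank (fst (relabel f S)) X (f a) = order_rank (fst (relabel f S)) X (g a)"
      unfolding eq by simp
    show "f a \<in> X" "g a \<in> X"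
      using that tour_aut_bij_betw[OF f] tour_aut_bij_betw[OF g] by (simp_all add: bij_betw_apply)
  qed
  moreover have "f \<in> extensional X" "g \<in> extensional X"
    using f g by (simp_all add: tour_aut_def PiE_iff)
  ultimately show "f = g"
    by (rule extensionalityI[rotated 2]) auto
qed

theorem card_tour_aut_mult_card_quotient:
  assumes "finite X"
  shows "card (tour_aut X E) * card (extensions X E // extension_iso X E) = card (extensions X E)"
proof -
  have "extensions X E \<subseteq> Pow (X \<times> X) \<times> Pow X"
    by (auto simp: extensions_def P2_struct_def)
  then have fin: "finite (extensions X E)"
    by (rule finite_subset) (simp add: assms)
  let ?Q = "extensions X E // extension_iso X E"
  have card_class: "card c = card (tour_aut X E)" if "c \<in> ?Q" for c
  proof -
    obtain S where S: "S \<in> extensions X E" "c = extension_iso X E `` {S}"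
      using \<open>c \<in> ?Q\<close> by (auto elim: quotientE)
    then show ?thesis
      using extension_iso_class[OF S(1)] inj_on_relabel_tour_aut[OF assms S(1)] by (simp add: card_image)
  qed
  have disjoint: "c1 \<inter> c2 = {}" if "c1 \<in> ?Q" "c2 \<in> ?Q" "c1 \<noteq> c2" for c1 c2
    using quotient_disj[OF equiv_extension_iso that(1,2)] that(3) by blast
  have "card (tour_aut X E) * card ?Q = card (\<Union> ?Q)"
    using finite_quotient[OF fin equiv_type[OF equiv_extension_iso]] fin card_class disjoint
    by (intro card_partition) (simp_all add: Union_quotient[OF equiv_extension_iso])
  also have "\<dots> = card (extensions X E)"
    by (simp add: Union_quotient[OF equiv_extension_iso])
  finally show ?thesis .
qed

section \<open>Tournaments of points in the plane\<close>

definition cross :: "complex \<Rightarrow> complex \<Rightarrow> real" where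
  "cross a b = Im (cnj a * b)"

lemma cross_self [simp]: "cross a a = 0"
  by (simp add: cross_def algebra_simps)

lemma cross_commute: "cross b a = - cross a b"
  by (simp add: cross_def algebra_simps)

lemma cross_minus_left [simp]: "cross (- a) b = - cross a b"
  and cross_minus_right [simp]: "cross a (- b) = - cross a b"
  by (simp_all add: cross_def)

lemma cross_pluecker: "cross u a * cross b c + cross u c * cross a b = cross u b * cross a c"
  by (simp add: cross_def algebra_simps)

lemma cross_cis: "cross (cis s) (cis t) = sin (t - s)"
  by (simp add: cross_def cis_cnj cis_mult)

lemma cross_pos_trans_half_plane:
  assumes "a \<in> H" "b \<in> H" "c \<in> H" and H: "H = insert u {v. 0 < cross u v}"
    and "0 < cross a b" "0 < cross b c"
  shows "0 < cross a c"
proof -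
  have "b \<noteq> u"
    using assms cross_commute[of u a] by auto
  then have "0 < cross u b" "c \<noteq> u"
    using assms cross_commute[of u b] by auto
  show ?thesis
  proof (cases "a = u")
    case True
    then show ?thesis using assms \<open>c \<noteq> u\<close> by simp
  next
    case False
    then have "0 < cross u a * cross b c + cross u c * cross a b"
      using assms \<open>c \<noteq> u\<close> by (simp add: add_pos_pos)
    then have "0 < cross u b * cross a c"
      by (simp only: cross_pluecker)
    then show ?thesis
      using \<open>0 < cross u b\<close> by (simp add: zero_less_mult_iff)
  qed
qed

definition flip :: "complex set \<Rightarrow> complex \<Rightarrow> complex" where
  "flip P x = (if x \<in> P then x else - x)"

text \<open>The only order L for which (L, P) can be an extension of the tournament given by cross > 0.\<close>
definition angular_order :: "complex set \<Rightarrow> complex set \<Rightarrow> (complex \<times> complex) set" where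
  "angular_order X P = {(a, b). a \<in> X \<and> b \<in> X \<and> 0 < cross (flip P a) (flip P b)}"

lemma angular_order_subset: "angular_order X P \<subseteq> X \<times> X"
  by (auto simp: angular_order_def)

lemma irrefl_angular_order: "irrefl (angular_order X P)"
  by (simp add: irrefl_def angular_order_def)

lemma cross_flip: "cross (flip P a) (flip P b) = (if (a \<in> P) = (b \<in> P) then cross a b else - cross a b)"
  by (simp add: flip_def)

lemma p_arc_angular_order:
  assumes "a \<in> X" "b \<in> X"
  shows "p_arc (angular_order X P, P) a b \<longleftrightarrow> 0 < cross a b"
  using assms by (auto simp: p_arc_def angular_order_def cross_flip cross_commute[of a b])

lemma extensions_cross:
  "extensions X (\<lambda>a b. 0 < cross a b)
    = (\<lambda>P. (angular_order X P, P)) ` {P. P \<subseteq> X \<and> strict_linear_order_on X (angular_order X P)}"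
proof (intro set_eqI iffI)
  fix S assume S: "S \<in> extensions X (\<lambda>a b. 0 < cross a b)"
  obtain L P where S_eq: "S = (L, P)" by (cases S)
  have "L = angular_order X P"
    using P2_order_eq_if_p_arc_eq[of S X "(angular_order X P, P)"] S p_arc_angular_order
    by (auto simp: S_eq extensions_def P2_struct_def angular_order_subset)
  then show "S \<in> (\<lambda>P. (angular_order X P, P)) ` {P. P \<subseteq> X \<and> strict_linear_order_on X (angular_order X P)}"
    using S by (auto simp: S_eq extensions_def P2_struct_def)
qed (auto simp: extensions_def P2_struct_def p_arc_angular_order dest: subsetD[OF angular_order_subset])

text \<open>The part P1 of the extension whose least element is m, with m \<in> P1 iff e.\<close>
definition leader_part :: "complex set \<Rightarrow> complex \<Rightarrow> bool \<Rightarrow> complex set" where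
  "leader_part X m e = {x \<in> X. if x = m then e else 0 < cross (if e then m else - m) x}"

lemma leader_part_subset: "leader_part X m e \<subseteq> X"
  by (auto simp: leader_part_def)

lemma leader_in_leader_part: "m \<in> X \<Longrightarrow> m \<in> leader_part X m e \<longleftrightarrow> e"
  by (simp add: leader_part_def)

lemma flip_leader_part_leader: "m \<in> X \<Longrightarrow> flip (leader_part X m e) m = (if e then m else - m)"
  by (simp add: flip_def leader_part_def)

locale central_general_position =
  fixes X :: "complex set"
  assumes finite: "finite X" and nonempty: "X \<noteq> {}"
    and cross_nonzero: "\<And>a b. a \<in> X \<Longrightarrow> b \<in> X \<Longrightarrow> a \<noteq> b \<Longrightarrow> cross a b \<noteq> 0"
begin

lemma total_on_angular_order: "total_on X (angular_order X P)"
  unfolding total_on_def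
proof (intro ballI impI)
  fix a b assume ab: "a \<in> X" "b \<in> X" "a \<noteq> b"
  have "cross (flip P a) (flip P b) \<noteq> 0"
    using cross_nonzero[OF ab] by (simp add: cross_flip)
  then show "(a, b) \<in> angular_order X P \<or> (b, a) \<in> angular_order X P"
    using ab cross_commute[of "flip P b" "flip P a"] by (auto simp: angular_order_def)
qed

lemma strict_linear_order_on_angular_order_iff:
  "strict_linear_order_on X (angular_order X P) \<longleftrightarrow> trans (angular_order X P)"
  by (simp add: strict_linear_order_on_def irrefl_angular_order total_on_angular_order)

lemma cross_flip_leader_part:
  assumes "m \<in> X" "x \<in> X" "x \<noteq> m"
  shows "0 < cross (if e then m else - m) (flip (leader_part X m e) x)"
proof -
  have "cross (if e then m else - m) x \<noteq> 0"
    using cross_nonzero[OF assms(1,2)] assms(3) by auto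
  then show ?thesis
    using assms by (auto simp: flip_def leader_part_def)
qed

lemma leader_part_least:
  assumes "m \<in> X" "x \<in> X" "x \<noteq> m"
  shows "(m, x) \<in> angular_order X (leader_part X m e)"
  using cross_flip_leader_part[OF assms, of e] assms
  by (simp add: angular_order_def flip_leader_part_leader)

lemma trans_angular_order_leader_part:
  assumes "m \<in> X"
  shows "trans (angular_order X (leader_part X m e))"
proof (rule transI)
  define u where "u = (if e then m else - m)"
  define H where "H = insert u {v. 0 < cross u v}"
  have flip_in_H: "flip (leader_part X m e) x \<in> H" if "x \<in> X" for x
    using assms that cross_flip_leader_part[OF assms that, of e]
    by (cases "x = m") (simp_all add: H_def u_def flip_leader_part_leader)
  fix a b c
  assume "(a, b) \<in> angular_order X (leader_part X m e)" "(b, c) \<in> angular_order X (leader_part X m e)"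
  then show "(a, c) \<in> angular_order X (leader_part X m e)"
    using cross_pos_trans_half_plane[OF flip_in_H flip_in_H flip_in_H H_def]
    by (auto simp: angular_order_def)
qed

lemma eq_leader_part:
  assumes "P \<subseteq> X" "m \<in> X" and least: "\<And>x. x \<in> X \<Longrightarrow> x \<noteq> m \<Longrightarrow> (m, x) \<in> angular_order X P"
  shows "P = leader_part X m (m \<in> P)"
proof -
  have "x \<in> P \<longleftrightarrow> 0 < cross (flip P m) x" if "x \<in> X" "x \<noteq> m" for x
    using least[OF that] by (cases "x \<in> P") (auto simp: angular_order_def flip_def[of P x])
  moreover have "flip P m = (if m \<in> P then m else - m)"
    by (simp add: flip_def)
  ultimately show ?thesis
    using assms(1,2) by (intro set_eqI) (auto simp: leader_part_def split: if_splits)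
qed

lemma bij_betw_leader_part:
  "bij_betw (\<lambda>(m, e). leader_part X m e) (X \<times> UNIV) {P. P \<subseteq> X \<and> trans (angular_order X P)}"
proof (rule bij_betw_imageI)
  show "inj_on (\<lambda>(m, e). leader_part X m e) (X \<times> UNIV)"
  proof (rule inj_onI, clarify)
    fix m e m' e'
    assume m: "m \<in> X" "m' \<in> X" and eq: "leader_part X m e = leader_part X m' e'"
    have "m = m'"
    proof (rule ccontr)
      let ?A = "angular_order X (leader_part X m e)"
      assume "m \<noteq> m'"
      then have "(m, m') \<in> ?A" "(m', m) \<in> ?A"
        using leader_part_least[of m m' e] leader_part_least[of m' m e'] m unfolding eq by auto
      then have "(m, m) \<in> ?A"
        using trans_angular_order_leader_part[OF m(1)] by (blast dest: transD)
      then show False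
        using irrefl_angular_order by (simp add: irrefl_def)
    qed
    moreover have "e = e'"
      using eq m leader_in_leader_part unfolding \<open>m = m'\<close> by metis
    ultimately show "m = m' \<and> e = e'" ..
  qed
  show "(\<lambda>(m, e). leader_part X m e) ` (X \<times> UNIV) = {P. P \<subseteq> X \<and> trans (angular_order X P)}"
  proof (intro set_eqI iffI)
    fix P assume "P \<in> {P. P \<subseteq> X \<and> trans (angular_order X P)}"
    then have P: "P \<subseteq> X" "strict_linear_order_on X (angular_order X P)"
      by (simp_all add: strict_linear_order_on_angular_order_iff)
    obtain m where m: "m \<in> X" and least: "\<And>x. x \<in> X \<Longrightarrow> x \<noteq> m \<Longrightarrow> (m, x) \<in> angular_order X P"
      using strict_linear_order_on_finite_least[OF finite nonempty angular_order_subset P(2)] by blast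
    have "P = leader_part X m (m \<in> P)"
      by (rule eq_leader_part[OF P(1) m least])
    then show "P \<in> (\<lambda>(m, e). leader_part X m e) ` (X \<times> UNIV)"
      using m by force
  next
    fix P assume "P \<in> (\<lambda>(m, e). leader_part X m e) ` (X \<times> UNIV)"
    then obtain m e where "m \<in> X" "P = leader_part X m e"
      by auto
    then show "P \<in> {P. P \<subseteq> X \<and> trans (angular_order X P)}"
      by (simp add: leader_part_subset trans_angular_order_leader_part)
  qed
qed

theorem card_extensions_cross: "card (extensions X (\<lambda>a b. 0 < cross a b)) = 2 * card X"
proof -
  let ?G = "{P. P \<subseteq> X \<and> trans (angular_order X P)}"
  have "extensions X (\<lambda>a b. 0 < cross a b) = (\<lambda>P. (angular_order X P, P)) ` ?G"
    by (simp add: extensions_cross strict_linear_order_on_angular_order_iff)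
  then have "card (extensions X (\<lambda>a b. 0 < cross a b)) = card ?G"
    by (simp add: card_image inj_on_def)
  also have "\<dots> = card (X \<times> (UNIV :: bool set))"
    by (rule bij_betw_same_card[OF bij_betw_leader_part, symmetric])
  finally show ?thesis
    by (simp add: card_cartesian_product)
qed

end

section \<open>Irrationality of pi\<close>

lemma higher_pderiv_pcompose_reflect:
  "(pderiv ^^ k) (pcompose p [:c, -1:]) = smult ((-1) ^ k) (pcompose ((pderiv ^^ k) p) [:c, -1::real:])"
proof (induction k)
  case (Suc k)
  then show ?case by (simp add: pderiv_smult pderiv_pcompose pderiv_pCons)
qed simp

lemma higher_pderiv_eq_0:
  fixes p :: "'a::{idom,semiring_char_0} poly"
  assumes "degree p < k"
  shows "(pderiv ^^ k) p = 0"
proof -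
  obtain j where k: "k = Suc j" using assms by (cases k) auto
  have "degree ((pderiv ^^ j) p) = 0" using assms k by (simp add: degree_higher_pderiv)
  then show ?thesis using k by (simp add: pderiv_eq_0_iff)
qed

lemma pderiv_pderiv_alternating_sum:
  fixes f :: "'a::idom poly"
  defines "F \<equiv> \<lambda>N. \<Sum>j<Suc N. smult ((-1)^j) ((pderiv ^^ (2*j)) f)"
  shows "pderiv (pderiv (F N)) + F N = f + smult ((-1)^N) ((pderiv ^^ (2*N+2)) f)"
proof (induction N)
  case 0 then show ?case by (simp add: F_def numeral_2_eq_2 add.commute)
next
  case (Suc N)
  define A where "A = (pderiv ^^ (2*N+2)) f"
  have "F (Suc N) = F N + smult ((-1)^(Suc N)) A"
    by (simp add: F_def A_def)
  then have "pderiv (pderiv (F (Suc N))) + F (Suc N)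
      = (pderiv (pderiv (F N)) + F N) + smult ((-1)^(Suc N)) (pderiv (pderiv A)) + smult ((-1)^(Suc N)) A"
    by (simp only: pderiv_add pderiv_smult add_ac)
  also have "\<dots> = f + smult ((-1)^(Suc N)) (pderiv (pderiv A))"
    using Suc unfolding A_def[symmetric] by (simp add: algebra_simps)
  also have "pderiv (pderiv A) = (pderiv ^^ (2 * Suc N + 2)) f"
    by (simp add: A_def numeral_2_eq_2)
  finally show ?case .
qed

lemma DERIV_sin_cos_combination:
  "DERIV (\<lambda>x. poly (pderiv F) x * sin x - poly F x * cos x) x :> poly (pderiv (pderiv F) + F) x * sin x"
proof -
  have "DERIV (\<lambda>x. poly (pderiv F) x * sin x - poly F x * cos x) x :>
     (poly (pderiv (pderiv F)) x * sin x + cos x * poly (pderiv F) x) - (poly (pderiv F) x * cos x + (- sin x) * poly F x)"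
    by (intro DERIV_diff DERIV_mult poly_DERIV DERIV_sin DERIV_cos)
  then show ?thesis by (simp add: algebra_simps)
qed

lemma ex_mult_power_div_fact_less_1: "\<exists>n. c * d ^ n / fact n < (1::real)"
proof -
  have "(\<lambda>n. inverse (fact n) *\<^sub>R d ^ n) \<longlonglongrightarrow> 0"
    by (rule summable_LIMSEQ_zero[OF summable_exp_generic])
  then have "(\<lambda>n. c * (inverse (fact n) *\<^sub>R d ^ n)) \<longlonglongrightarrow> 0"
    by (rule tendsto_mult_right_zero)
  then have "eventually (\<lambda>n. c * (inverse (fact n) *\<^sub>R d ^ n) < 1) sequentially"
    by (rule order_tendstoD) simp
  then obtain n where "c * (inverse (fact n) *\<^sub>R d ^ n) < 1"
    by (meson eventually_sequentially order_refl)
  then show ?thesis by (auto simp: field_simps)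
qed

lemma coeff_power_Ints:
  fixes p :: "'a::comm_ring_1 poly"
  assumes "\<And>i. coeff p i \<in> \<int>"
  shows "coeff (p ^ n) j \<in> \<int>"
proof (induction n arbitrary: j)
  case (Suc n)
  then show ?case using assms by (simp add: coeff_mult Ints_sum Ints_mult)
qed (simp add: coeff_1)

definition niven_poly :: "nat \<Rightarrow> int \<Rightarrow> int \<Rightarrow> real poly" where
  "niven_poly n a b = smult (1 / fact n) (monom 1 n * [:of_int a, - of_int b:] ^ n)"

lemma poly_niven_poly: "poly (niven_poly n a b) x = x ^ n * (of_int a - of_int b * x) ^ n / fact n"
  by (simp add: niven_poly_def poly_monom mult.commute)

lemma degree_niven_poly: "degree (niven_poly n a b) \<le> 2 * n"
proof -
  have "degree (monom (1::real) n * [:of_int a, - of_int b:] ^ n) \<le> n + 1 * n"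
    by (intro order.trans[OF degree_mult_le] add_mono degree_monom_le order.trans[OF degree_power_le])
      simp_all
  then show ?thesis by (simp add: niven_poly_def)
qed

lemma niven_poly_higher_pderiv_0_Ints: "poly ((pderiv ^^ k) (niven_poly n a b)) 0 \<in> \<int>"
proof -
  have coeff_Ints: "coeff ([:of_int a, - of_int b:] ^ n :: real poly) j \<in> \<int>" for j
    by (rule coeff_power_Ints) (simp add: coeff_pCons split: nat.split)
  have "poly ((pderiv ^^ k) (niven_poly n a b)) 0 = fact k / fact n * coeff (monom 1 n * [:of_int a, - of_int b:] ^ n) k"
    by (simp add: niven_poly_def poly_0_coeff_0 coeff_higher_pderiv pochhammer_fact)
  also have "\<dots> \<in> \<int>"
  proof (cases "k < n")
    case False
    then obtain m :: nat where "fact k = fact n * m"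
      using fact_dvd[of n k] by (auto elim: dvdE)
    then have "fact k / fact n = (of_nat m :: real)"
      by (metis fact_nonzero nonzero_mult_div_cancel_left of_nat_fact of_nat_mult)
    then show ?thesis using False coeff_Ints by (simp add: coeff_monom_mult)
  qed (simp add: coeff_monom_mult)
  finally show ?thesis .
qed

lemma niven_poly_reflect:
  assumes "b \<noteq> 0"
  shows "pcompose (niven_poly n a b) [:of_int a / of_int b, -1:] = niven_poly n a b"
proof (rule poly_eq_poly_eq_iff[THEN iffD1], rule ext)
  fix x :: real
  have "of_int a - of_int b * (of_int a / of_int b - x) = of_int b * x"
    and "of_int a / of_int b - x = (of_int a - of_int b * x) / of_int b"
    using assms by (simp_all add: field_simps)
  then show "poly (pcompose (niven_poly n a b) [:of_int a / of_int b, -1:]) x = poly (niven_poly n a b) x"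
    using assms by (simp add: poly_pcompose poly_niven_poly power_mult_distrib power_divide mult_ac)
qed

lemma niven_poly_higher_pderiv_Ints:
  assumes "b \<noteq> 0"
  shows "poly ((pderiv ^^ k) (niven_poly n a b)) (of_int a / of_int b) \<in> \<int>"
proof -
  let ?r = "of_int a / of_int b :: real"
  have "poly ((pderiv ^^ k) (niven_poly n a b)) ?r
      = poly ((pderiv ^^ k) (pcompose (niven_poly n a b) [:?r, -1:])) ?r"
    using niven_poly_reflect[OF assms] by simp
  also have "\<dots> = (-1) ^ k * poly ((pderiv ^^ k) (niven_poly n a b)) 0"
    by (simp add: higher_pderiv_pcompose_reflect poly_pcompose)
  also have "\<dots> \<in> \<int>"
    using niven_poly_higher_pderiv_0_Ints by (intro Ints_mult) auto
  finally show ?thesis .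
qed

lemma niven_poly_bounds:
  fixes x :: real
  assumes "b > 0" "0 < x" "x < of_int a / of_int b"
  shows "0 < poly (niven_poly n a b) x"
    and "poly (niven_poly n a b) x \<le> (of_int a / of_int b * of_int a) ^ n / fact n"
proof -
  have pos: "0 < of_int a - of_int b * x" and le: "of_int a - of_int b * x \<le> of_int a"
    using assms by (simp_all add: field_simps)
  have poly: "poly (niven_poly n a b) x = (x * (of_int a - of_int b * x)) ^ n / fact n"
    by (simp add: poly_niven_poly power_mult_distrib)
  show "0 < poly (niven_poly n a b) x"
    unfolding poly using assms pos by simp
  have "(x * (of_int a - of_int b * x)) ^ n \<le> (of_int a / of_int b * of_int a) ^ n"
    using assms pos le by (intro power_mono mult_mono) auto
  then show "poly (niven_poly n a b) x \<le> (of_int a / of_int b * of_int a) ^ n / fact n"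
    unfolding poly by (simp add: divide_right_mono)
qed

theorem pi_not_Rats: "pi \<notin> \<rat>"
proof
  assume "pi \<in> \<rat>"
  then obtain a b :: int where b: "b > 0" and pi: "pi = of_int a / of_int b"
    using Rats_cases' by metis
  obtain n where n: "pi * (pi * of_int a) ^ n / fact n < 1"
    using ex_mult_power_div_fact_less_1 by blast
  define f where "f = niven_poly n a b"
  define F where "F = (\<Sum>j<Suc n. smult ((-1)^j) ((pderiv ^^ (2*j)) f))"
  define G where "G = (\<lambda>x. poly (pderiv F) x * sin x - poly F x * cos x)"
  \<comment> \<open>G' = f sin, so G pi - G 0 is an integer by integrality of f and its derivatives at 0 and pi,
    yet strictly between 0 and 1 by the mean value theorem.\<close>
  have "(pderiv ^^ (2*n+2)) f = 0"
    using degree_niven_poly[of n a b] by (intro higher_pderiv_eq_0) (simp add: f_def)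
  then have "pderiv (pderiv F) + F = f"
    using pderiv_pderiv_alternating_sum[of f n] by (simp add: F_def)
  then have "DERIV G x :> poly f x * sin x" for x
    using DERIV_sin_cos_combination[of F x] by (simp add: G_def)
  from MVT2[OF pi_gt_zero this] obtain z
    where z: "0 < z" "z < pi" and "G pi - G 0 = (pi - 0) * (poly f z * sin z)"
    by blast
  then have Gz: "G pi - G 0 = pi * (poly f z * sin z)"
    by simp
  have "poly F x \<in> \<int>" if "\<And>k. poly ((pderiv ^^ k) f) x \<in> \<int>" for x
    using that by (simp add: F_def poly_sum Ints_sum Ints_mult)
  moreover have "G pi - G 0 = poly F pi + poly F 0"
    by (simp add: G_def)
  ultimately have "G pi - G 0 \<in> \<int>"
    using niven_poly_higher_pderiv_0_Ints niven_poly_higher_pderiv_Ints[of b] b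
    by (simp add: f_def pi)
  have f_pos: "0 < poly f z" and f_le: "poly f z \<le> (pi * of_int a) ^ n / fact n"
    using niven_poly_bounds[OF b, where x = z and n = n] z by (simp_all add: f_def pi)
  have sin: "0 < sin z" "sin z \<le> 1"
    using z by (simp_all add: sin_gt_zero)
  have "0 < G pi - G 0"
    using Gz f_pos sin by simp
  moreover have "poly f z * sin z \<le> (pi * of_int a) ^ n / fact n"
    using f_pos sin f_le mult_left_le[of "sin z" "poly f z"] by linarith
  then have "G pi - G 0 < 1"
    using Gz n pi_gt_zero by (smt (verit) mult_left_mono times_divide_eq_right)
  ultimately show False
    using \<open>G pi - G 0 \<in> \<int>\<close> by (auto elim!: Ints_cases)
qed

section \<open>The tournament S(2)\<close>

lemma S2_arc_iff_cross:
  assumes "a \<in> S2_vertices"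
  shows "S2_arc a b \<longleftrightarrow> 0 < cross a b"
proof -
  obtain q :: rat where a: "a = cis (of_rat q)"
    using assms by (auto simp: S2_vertices_def)
  have "b / a = cnj a * b"
    by (simp add: a divide_inverse cis_cnj mult.commute)
  then show ?thesis
    using Arg_lt_pi by (simp add: S2_arc_def cross_def)
qed

lemma cross_S2_vertices_nonzero:
  assumes "a \<in> S2_vertices" "b \<in> S2_vertices" "a \<noteq> b"
  shows "cross a b \<noteq> 0"
proof
  assume "cross a b = 0"
  obtain q r :: rat where a: "a = cis (of_rat q)" and b: "b = cis (of_rat r)"
    using assms(1,2) by (auto simp: S2_vertices_def)
  have "sin (of_rat r - of_rat q :: real) = 0"
    using \<open>cross a b = 0\<close> by (simp add: a b cross_cis)
  then obtain i :: int where i: "of_rat r - of_rat q = (of_int i * pi :: real)"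
    by (auto simp: sin_zero_iff_int2)
  show False
  proof (cases "i = 0")
    case True
    then show False
      using i assms(3) by (simp add: a b)
  next
    case False
    then have "pi = (of_rat r - of_rat q) / of_int i"
      using i by simp
    also have "\<dots> \<in> \<rat>"
      by (intro Rats_divide Rats_diff) auto
    finally show False
      using pi_not_Rats by simp
  qed
qed

theorem lemma2:
  fixes X :: "complex set"
  assumes "finite X" and "X \<noteq> {}" and "X \<subseteq> S2_vertices"
  shows "real (card (extensions X S2_arc //
                     {(S, T). S \<in> extensions X S2_arc \<and> T \<in> extensions X S2_arc \<and> P2_iso X S X T}))
         = 2 * real (card X) / real (card (tour_aut X S2_arc))"
proof -
  interpret central_general_position X
    using assms cross_S2_vertices_nonzero by unfold_locales auto
  have "extensions X S2_arc = extensions X (\<lambda>a b. 0 < cross a b)"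
    using assms(3) S2_arc_iff_cross by (intro extensions_cong) auto
  have "card (tour_aut X S2_arc) * card (extensions X S2_arc // extension_iso X S2_arc)
      = card (extensions X S2_arc)"
    by (rule card_tour_aut_mult_card_quotient[OF assms(1)])
  also have "\<dots> = 2 * card X"
    unfolding \<open>extensions X S2_arc = _\<close> by (rule card_extensions_cross)
  finally have count: "card (tour_aut X S2_arc) * card (extensions X S2_arc // extension_iso X S2_arc)
      = 2 * card X" .
  then have "card (tour_aut X S2_arc) \<noteq> 0"
    using assms(1,2) by auto
  moreover from count have "real (card (tour_aut X S2_arc)) * real (card (extensions X S2_arc // extension_iso X S2_arc))
      = 2 * real (card X)"
    by (metis of_nat_mult of_nat_numeral)
  ultimately show ?thesis
    unfolding extension_iso_def[symmetric] by (simp add: field_simps)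
qed

end
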